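(* Let $E$ be a reflexive Banach space with $E = V \oplus W$, where $V$ and $W$ are linear subspaces and $\dim V < +\infty$. Let $\Phi\colon E \to \mathbb{R}$ be a $C^1$-functional satisfying: (i) $\Phi$ is coercive on $W$, i.e. $\Phi(w) \to +\infty$ as $\|w\| \to \infty$, $w \in W$; (ii) for every $w \in W$, the map $v \mapsto \Phi(v+w)$, $V \to \mathbb{R}$, is quasi-concave; (iii) $\Phi(v+w) \to -\infty$ as $\|v\| \to +\infty$ ($v\in V$), uniformly for $w$ in bounded subsets of $W$; (iv) for every $v \in V$, the map $w \mapsto \Phi(v+w)$, $W\to\mathbb{R}$, is weakly lower semi-continuous. Then $\Phi$ admits a critical point $u \in E$ (i.e. $\Phi'(u)=0$) with $\Phi(u) = c$, where $$c = \min_{w \in W} \max_{v \in V} \Phi(v+w).$$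
   Context: A function $f\colon V \to \mathbb{R}$ is quasi-concave if $f(tx+(1-t)y) \ge \min\{f(x), f(y)\}$ for all $x,y \in V$ and $t \in [0,1]$ (equivalently, all superlevel sets $\{f \ge \alpha\}$ are convex). *)

theory Defs
  imports "HOL-Analysis.Analysis"
begin

definition reflexive_space :: "'a::real_normed_vector itself \<Rightarrow> bool" where
  "reflexive_space _ \<longleftrightarrow>
     (\<forall>\<phi> :: ('a \<Rightarrow>\<^sub>L real) \<Rightarrow>\<^sub>L real. \<exists>x::'a. \<forall>f. blinfun_apply \<phi> f = blinfun_apply f x)"

definition weak_topology :: "'a::real_normed_vector topology" where
  "weak_topology = topology_generated_by
     {{x. blinfun_apply f x \<in> U} | (f :: 'a \<Rightarrow>\<^sub>L real) U. open U}"

definition weakly_lsc_on :: "'a::real_normed_vector set \<Rightarrow> ('a \<Rightarrow> real) \<Rightarrow> bool" where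
  "weakly_lsc_on S g \<longleftrightarrow>
     (\<forall>\<alpha>. closedin (subtopology weak_topology S) {x\<in>S. g x \<le> \<alpha>})"

definition quasi_concave_on :: "'a::real_vector set \<Rightarrow> ('a \<Rightarrow> real) \<Rightarrow> bool" where
  "quasi_concave_on S f \<longleftrightarrow>
     (\<forall>x\<in>S. \<forall>y\<in>S. \<forall>t::real. 0 \<le> t \<and> t \<le> 1 \<longrightarrow>
        f (t *\<^sub>R x + (1 - t) *\<^sub>R y) \<ge> min (f x) (f y))"

end

(*
  For w in W put m(w) = max over v in V of Phi(v + w); the maximum exists because V is
  finite-dimensional and Phi(. + w) tends to -infinity on V. As a supremum of weakly lower
  semicontinuous functions, m is weakly lower semicontinuous, and it is coercive on W since
  m(w) >= Phi(w). Bounded subsets of the closed subspace W are weakly relatively compact in the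
  reflexive space (W is weakly closed because it has finite codimension), so m attains its
  minimum c at some w0.

  The maximisers M of Phi(. + w0) form a compact convex set on which Phi'(. + w0) vanishes along
  V. For every direction d in W, maximisers for w0 + d/(n+1) accumulate, by the mean value
  theorem and the minimality of w0, at a point of M where Phi'(. + w0) d >= 0; quasi-concavity
  makes the set of such points convex. Komiya's connectedness argument for Sion's minimax
  theorem then produces one v in M with Phi'(v + w0) d >= 0 for all d in W, hence
  Phi'(v + w0) = 0 on W = -W and on V, and u = v + w0 is a critical point at level c.
*)
theory Submission
  imports Defs
begin

section \<open>Finite-dimensional subspaces of Banach spaces\<close>

lemma abs_scale_infdist_le_norm:
  fixes S :: "'a::real_normed_vector set"
  assumes "subspace S" "s \<in> S"
  shows "\<bar>k\<bar> * infdist u S \<le> norm (s + k *\<^sub>R u)"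
proof (cases "k = 0")
  case False
  have "(- inverse k) *\<^sub>R s \<in> S" using subspace_scale[OF assms] .
  then have "infdist u S \<le> dist u ((- inverse k) *\<^sub>R s)" by (rule infdist_le)
  also have "\<dots> = norm (inverse k *\<^sub>R (s + k *\<^sub>R u))"
    using False by (simp add: dist_norm algebra_simps)
  also have "\<dots> = norm (s + k *\<^sub>R u) / \<bar>k\<bar>" by (simp add: divide_inverse_commute)
  finally show ?thesis using False by (simp add: field_simps)
qed simp

lemma mem_plus_span_singleton: "x \<in> S + span {u} \<longleftrightarrow> (\<exists>k. x - k *\<^sub>R u \<in> S)"
proof
  assume "x \<in> S + span {u}"
  then obtain s k where "s \<in> S" "x = s + k *\<^sub>R u" by (auto simp: set_plus_def span_singleton)
  then show "\<exists>k. x - k *\<^sub>R u \<in> S" by (intro exI[of _ k]) simp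
next
  assume "\<exists>k. x - k *\<^sub>R u \<in> S"
  then obtain k where "x - k *\<^sub>R u \<in> S" ..
  moreover have "k *\<^sub>R u \<in> span {u}" by (simp add: span_base span_scale)
  ultimately have "(x - k *\<^sub>R u) + k *\<^sub>R u \<in> S + span {u}" by (rule set_plus_intro)
  then show "x \<in> S + span {u}" by simp
qed

lemma span_insert_eq_plus: "span (insert u F) = span F + span {u}"
  by (auto simp: span_breakdown_eq mem_plus_span_singleton)

lemma bounded_coefficients_off_closed_subspace:
  fixes S :: "'a::real_normed_vector set"
  assumes S: "subspace S" "closed S" "u \<notin> S"
    and x: "bounded (range x)" "\<And>n. x n - k n *\<^sub>R u \<in> S"
  shows "bounded (range k)"
proof -
  have "S \<noteq> {}" using S(1) subspace_0 by blast
  then have d: "infdist u S > 0" using infdist_pos_not_in_closed[OF S(2) _ S(3)] by simp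
  obtain B where B: "\<And>n. norm (x n) \<le> B" using x(1) unfolding bounded_iff by auto
  have "\<bar>k n\<bar> * infdist u S \<le> B" for n
    using abs_scale_infdist_le_norm[OF S(1) x(2)[of n], where k="k n" and u=u] B[of n] by simp
  then have "\<bar>k n\<bar> \<le> B / infdist u S" for n using d by (simp add: field_simps)
  then show ?thesis by (intro boundedI[where B="B / infdist u S"]) auto
qed

lemma closed_subspace_plus_span_singleton:
  fixes S :: "'a::banach set"
  assumes S: "subspace S" "closed S"
  shows "closed (S + span {u})"
proof (cases "u \<in> S")
  case True
  have "S + span {u} = S"
  proof
    show "S + span {u} \<subseteq> S"
      using True S(1) by (auto simp: set_plus_def span_singleton subspace_add subspace_scale)
    show "S \<subseteq> S + span {u}" by (auto simp: mem_plus_span_singleton intro!: exI[of _ 0])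
  qed
  then show ?thesis using S(2) by simp
next
  case False
  show ?thesis unfolding closed_sequential_limits
  proof (intro allI impI, elim conjE)
    fix x l assume x: "\<forall>n. x n \<in> S + span {u}" and l: "x \<longlonglongrightarrow> l"
    have "\<forall>n. \<exists>k. x n - k *\<^sub>R u \<in> S" using x by (simp add: mem_plus_span_singleton)
    then obtain k where k: "\<And>n. x n - k n *\<^sub>R u \<in> S" by metis
    have "bounded (range k)"
      using bounded_coefficients_off_closed_subspace[OF S False convergent_imp_bounded[OF l] k] .
    then obtain r c where r: "strict_mono r" "(k \<circ> r) \<longlonglongrightarrow> c"
      using bounded_imp_convergent_subsequence by blast
    have lim: "(\<lambda>n. x (r n) - (k \<circ> r) n *\<^sub>R u) \<longlonglongrightarrow> l - c *\<^sub>R u"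
      using LIMSEQ_subseq_LIMSEQ[OF l r(1)] r(2) by (intro tendsto_intros) (simp_all add: o_def)
    have "l - c *\<^sub>R u \<in> S"
      using closed_sequentially[OF S(2) _ lim] k by simp
    then show "l \<in> S + span {u}" by (auto simp: mem_plus_span_singleton)
  qed
qed

lemma subspace_set_plus: "subspace S \<Longrightarrow> subspace T \<Longrightarrow> subspace (S + T)"
proof -
  have "S + T = {x + y | x y. x \<in> S \<and> y \<in> T}" by (auto simp: set_plus_def)
  then show "subspace S \<Longrightarrow> subspace T \<Longrightarrow> subspace (S + T)" by (simp add: subspace_sums)
qed

lemma closed_subspace_plus_span:
  fixes S :: "'a::banach set"
  assumes "subspace S" "closed S" "finite F"
  shows "closed (S + span F)"
  using \<open>finite F\<close>
proof (induction F rule: finite_induct)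
  case empty
  then show ?case using assms by simp
next
  case (insert u F)
  have "S + span (insert u F) = (S + span F) + span {u}"
    by (simp only: span_insert_eq_plus[of u F] add.assoc)
  moreover have "subspace (S + span F)" using assms(1) by (simp add: subspace_set_plus)
  ultimately show ?case using closed_subspace_plus_span_singleton[OF _ insert.IH] by simp
qed

lemma closed_span_finite:
  fixes F :: "'a::banach set"
  shows "finite F \<Longrightarrow> closed (span F)"
  using closed_subspace_plus_span[of "{0}" F] by simp

lemma span_finite_bounded_convergent_subseq:
  fixes F :: "'a::banach set" and x :: "nat \<Rightarrow> 'a"
  assumes "finite F" "\<And>n. x n \<in> span F" "bounded (range x)"
  shows "\<exists>l r. strict_mono r \<and> (x \<circ> r) \<longlonglongrightarrow> l"
  using assms
proof (induction F arbitrary: x rule: finite_induct)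
  case empty
  then have "x = (\<lambda>n. 0)" by auto
  then have "(x \<circ> id) \<longlonglongrightarrow> 0" by simp
  then show ?case using strict_mono_id by blast
next
  case (insert u F)
  show ?case
  proof (cases "u \<in> span F")
    case True
    then have "span (insert u F) = span F" by (rule span_redundant)
    then show ?thesis using insert.IH[of x] insert.prems by simp
  next
    case False
    have "\<forall>n. \<exists>k. x n - k *\<^sub>R u \<in> span F" using insert.prems(1) span_breakdown_eq by blast
    then obtain k where k: "\<And>n. x n - k n *\<^sub>R u \<in> span F" by metis
    define s where "s n = x n - k n *\<^sub>R u" for n
    have "bounded (range k)"
      by (rule bounded_coefficients_off_closed_subspace[OF subspace_span
            closed_span_finite[OF insert.hyps(1)] False insert.prems(2) k])
    then have "bounded ((\<lambda>c. c *\<^sub>R u) ` range k)"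
      by (rule bounded_linear_image[OF _ bounded_linear_scaleR_left])
    then have "bounded (range s)"
      unfolding s_def using insert.prems(2) by (intro bounded_minus_comp) (simp_all add: image_image)
    moreover have "s n \<in> span F" for n using k by (simp add: s_def)
    ultimately obtain s0 r1 where r1: "strict_mono r1" "(s \<circ> r1) \<longlonglongrightarrow> s0"
      using insert.IH[of s] by blast
    have "bounded (range (k \<circ> r1))" using \<open>bounded (range k)\<close> by (rule bounded_subset) auto
    then obtain r2 c where r2: "strict_mono r2" "(k \<circ> r1 \<circ> r2) \<longlonglongrightarrow> c"
      using bounded_imp_convergent_subsequence by blast
    have "(\<lambda>n. (s \<circ> r1 \<circ> r2) n + (k \<circ> r1 \<circ> r2) n *\<^sub>R u) \<longlonglongrightarrow> s0 + c *\<^sub>R u"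
      using LIMSEQ_subseq_LIMSEQ[OF r1(2) r2(1)] r2(2) by (intro tendsto_intros)
    then have "(x \<circ> (r1 \<circ> r2)) \<longlonglongrightarrow> s0 + c *\<^sub>R u" by (simp add: s_def o_def)
    then show ?thesis using strict_mono_o[OF r1(1) r2(1)] by blast
  qed
qed

lemma compact_span_Int_cball:
  fixes F :: "'a::banach set"
  assumes "finite F"
  shows "compact (span F \<inter> cball 0 R)"
  unfolding compact_eq_seq_compact_metric
proof (rule seq_compactI)
  fix x :: "nat \<Rightarrow> 'a" assume x: "\<forall>n. x n \<in> span F \<inter> cball 0 R"
  then have "bounded (range x)" unfolding bounded_iff by auto
  then obtain l r where lr: "strict_mono r" "(x \<circ> r) \<longlonglongrightarrow> l"
    using span_finite_bounded_convergent_subseq[OF assms] x by blast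
  have "closed (span F \<inter> cball 0 R)" using closed_span_finite[OF assms] by blast
  then have "l \<in> span F \<inter> cball 0 R" by (rule closed_sequentially[OF _ _ lr(2)]) (use x in auto)
  then show "\<exists>l\<in>span F \<inter> cball 0 R. \<exists>r. strict_mono r \<and> (x \<circ> r) \<longlonglongrightarrow> l" using lr by blast
qed

section \<open>Functionals vanishing on a subspace of finite codimension\<close>

lemma exists_functional_annihilating_closed_hyperplane:
  fixes H :: "'a::real_normed_vector set"
  assumes H: "subspace H" "closed H" and v: "v \<notin> H" and span: "H + span {v} = UNIV"
  shows "\<exists>f::'a \<Rightarrow>\<^sub>L real. (\<forall>h\<in>H. f h = 0) \<and> f v = 1"
proof -
  have unique: "t = t'" if "y - t *\<^sub>R v \<in> H" "y - t' *\<^sub>R v \<in> H" for y t t'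
  proof (rule ccontr)
    assume "t \<noteq> t'"
    have "(y - t *\<^sub>R v) - (y - t' *\<^sub>R v) \<in> H" by (rule subspace_diff[OF H(1) that])
    then have "(t' - t) *\<^sub>R v \<in> H" by (simp add: algebra_simps)
    then have "inverse (t' - t) *\<^sub>R ((t' - t) *\<^sub>R v) \<in> H" by (rule subspace_scale[OF H(1)])
    then show False using \<open>t \<noteq> t'\<close> v by simp
  qed
  define f where "f y = (THE t. y - t *\<^sub>R v \<in> H)" for y
  have f_eq: "f y = t" if "y - t *\<^sub>R v \<in> H" for y t
    unfolding f_def using that unique by blast
  have f_mem: "y - f y *\<^sub>R v \<in> H" for y
    using span mem_plus_span_singleton[of y H v] f_eq by auto
  have "linear f"
  proof
    fix y z
    have "(y - f y *\<^sub>R v) + (z - f z *\<^sub>R v) \<in> H" by (rule subspace_add[OF H(1) f_mem f_mem])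
    then show "f (y + z) = f y + f z" by (intro f_eq) (simp add: algebra_simps)
  next
    fix c y
    have "c *\<^sub>R (y - f y *\<^sub>R v) \<in> H" by (rule subspace_scale[OF H(1) f_mem])
    then show "f (c *\<^sub>R y) = c *\<^sub>R f y" by (simp add: f_eq algebra_simps)
  qed
  have "H \<noteq> {}" using H(1) subspace_0 by blast
  then have d: "infdist v H > 0" using infdist_pos_not_in_closed[OF H(2) _ v] by simp
  have "bounded_linear f"
  proof (rule bounded_linear_intro[where K="inverse (infdist v H)"])
    fix y
    have "\<bar>f y\<bar> * infdist v H \<le> norm ((y - f y *\<^sub>R v) + f y *\<^sub>R v)"
      by (rule abs_scale_infdist_le_norm[OF H(1) f_mem])
    then show "norm (f y) \<le> norm y * inverse (infdist v H)" using d by (simp add: field_simps)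
  qed (use \<open>linear f\<close> in \<open>auto simp: linear_add linear_scale\<close>)
  moreover have "f h = 0" if "h \<in> H" for h using that by (intro f_eq) simp
  moreover have "f v = 1" using H(1) by (intro f_eq) (simp add: subspace_0)
  ultimately show ?thesis by (intro exI[of _ "Blinfun f"]) (simp add: bounded_linear_Blinfun_apply)
qed

lemma exists_functional_separating_from_subspace:
  fixes V W :: "'a::banach set"
  assumes W: "subspace W" "closed W" and VW: "V \<inter> W = {0}" "V + W = UNIV"
    and V: "finite B" "V = span B" and x: "x \<notin> W"
  shows "\<exists>f::'a \<Rightarrow>\<^sub>L real. (\<forall>w\<in>W. f w = 0) \<and> f x \<noteq> 0"
proof -
  txt \<open>No Hahn--Banach theorem is needed: the closed subspace \<open>W + span (C - {v})\<close> below
    is a hyperplane not containing \<open>v\<close>.\<close>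
  have "x \<in> V + W" using VW(2) by simp
  then obtain v w where vw: "x = v + w" "v \<in> V" "w \<in> W" by (rule set_plus_elim)
  have "v \<noteq> 0" using vw x by auto
  then have "independent {v}" by simp
  then obtain C where C: "{v} \<subseteq> C" "C \<subseteq> V" "independent C" "V \<subseteq> span C"
    using maximal_independent_subset_extend[of "{v}" V] vw(2) by blast
  have "finite C" using independent_span_bound[OF V(1) C(3)] C(2) V(2) by blast
  define H where "H = W + span (C - {v})"
  have H: "subspace H" "closed H"
    unfolding H_def using W \<open>finite C\<close> by (simp_all add: subspace_set_plus closed_subspace_plus_span)
  have "v \<notin> H"
  proof
    assume "v \<in> H"
    then obtain a b where ab: "v = a + b" "a \<in> W" "b \<in> span (C - {v})"
      unfolding H_def set_plus_def by blast
    have "span (C - {v}) \<subseteq> V" by (rule span_minimal) (use C(2) V(2) in auto)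
    then have "v - b \<in> V" using ab(3) vw(2) V(2) by (simp add: subsetD span_diff)
    then have "a \<in> V" using ab(1) by simp
    then have "a = 0" using ab(2) VW(1) by blast
    then have "v \<in> span (C - {v})" using ab by simp
    then show False using C(1,3) dependent_def by blast
  qed
  moreover have "H + span {v} = UNIV"
  proof -
    have "V \<subseteq> span (C - {v}) + span {v}"
      using C(1,4) span_insert_eq_plus[of v "C - {v}"] by (simp add: insert_absorb)
    then have "W + V \<subseteq> W + (span (C - {v}) + span {v})" by (intro set_plus_mono2) auto
    moreover have "W + V = UNIV" using VW(2) by (simp add: add.commute)
    moreover have "H + span {v} = W + (span (C - {v}) + span {v})" by (simp add: H_def add.assoc)
    ultimately show ?thesis by auto
  qed
  ultimately obtain f :: "'a \<Rightarrow>\<^sub>L real" where f: "\<forall>h\<in>H. f h = 0" "f v = 1"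
    using exists_functional_annihilating_closed_hyperplane[OF H] by blast
  have "W \<subseteq> H" unfolding H_def using set_plus_intro[OF _ span_zero, of _ W "C - {v}"] by auto
  then have "\<forall>w\<in>W. f w = 0" using f(1) by blast
  moreover have "f x = 1" using f vw \<open>W \<subseteq> H\<close> by (auto simp: blinfun.add_right)
  ultimately show ?thesis by auto
qed

section \<open>Weak compactness and minimisation\<close>

lemma openin_weak_topology_imp_vimage:
  assumes "openin (weak_topology :: 'a::real_normed_vector topology) U"
  shows "\<exists>T. open T \<and> U = (\<lambda>x (f::'a \<Rightarrow>\<^sub>L real). f x) -` T"
proof -
  have "generate_topology_on {{x. blinfun_apply f x \<in> T} | (f :: 'a \<Rightarrow>\<^sub>L real) T. open T} U"
    using assms unfolding weak_topology_def by (rule openin_topology_generated_by)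
  then show ?thesis
  proof (induction rule: generate_topology_on.induct)
    case Empty
    show ?case by (intro exI[of _ "{}"]) auto
  next
    case (Int a b)
    then obtain T1 T2 where "open T1" "a = (\<lambda>x (f::'a \<Rightarrow>\<^sub>L real). f x) -` T1"
      "open T2" "b = (\<lambda>x (f::'a \<Rightarrow>\<^sub>L real). f x) -` T2" by blast
    then show ?case by (intro exI[of _ "T1 \<inter> T2"]) auto
  next
    case (UN K)
    then obtain T where "\<And>k. k \<in> K \<Longrightarrow> open (T k) \<and> k = (\<lambda>x (f::'a \<Rightarrow>\<^sub>L real). f x) -` T k"
      by metis
    then show ?case by (intro exI[of _ "\<Union>k\<in>K. T k"]) auto
  next
    case (Basis s)
    then obtain f :: "'a \<Rightarrow>\<^sub>L real" and T where "s = {x. f x \<in> T}" "open T" by blast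
    moreover have "open ((\<lambda>\<phi>::('a \<Rightarrow>\<^sub>L real) \<Rightarrow> real. \<phi> f) -` T)"
      using \<open>open T\<close> continuous_on_open_vimage[of UNIV "\<lambda>\<phi>::('a \<Rightarrow>\<^sub>L real) \<Rightarrow> real. \<phi> f"] by simp
    ultimately show ?case by (intro exI[of _ "(\<lambda>\<phi>. \<phi> f) -` T"]) auto
  qed
qed

lemma topspace_weak_topology: "topspace (weak_topology :: 'a::real_normed_vector topology) = UNIV"
proof -
  have "UNIV \<in> {{x. blinfun_apply f x \<in> T} | (f :: 'a \<Rightarrow>\<^sub>L real) T. open T}" by blast
  then show ?thesis unfolding weak_topology_def topology_generated_by_topspace by blast
qed

lemma compactin_weak_topology_if_compact_evaluations:
  fixes K :: "'a::real_normed_vector set"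
  assumes "compact ((\<lambda>x (f::'a \<Rightarrow>\<^sub>L real). f x) ` K)"
  shows "compactin weak_topology K"
  unfolding compactin_def
proof (intro conjI allI impI)
  define ev where "ev x = (\<lambda>f::'a \<Rightarrow>\<^sub>L real. f x)" for x
  show "K \<subseteq> topspace weak_topology" by (simp add: topspace_weak_topology)
  fix \<U> assume U: "Ball \<U> (openin weak_topology) \<and> K \<subseteq> \<Union>\<U>"
  then have "\<forall>u\<in>\<U>. \<exists>T. open T \<and> u = ev -` T"
    using openin_weak_topology_imp_vimage unfolding ev_def by blast
  then obtain T where T: "\<And>u. u \<in> \<U> \<Longrightarrow> open (T u)" "\<And>u x. u \<in> \<U> \<Longrightarrow> x \<in> u \<longleftrightarrow> ev x \<in> T u"
    by (metis vimage_eq)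
  have "compact (ev ` K)" using assms unfolding ev_def .
  moreover have "ev ` K \<subseteq> \<Union>(T ` \<U>)" using U T(2) by blast
  moreover have "\<And>B. B \<in> T ` \<U> \<Longrightarrow> open B" using T(1) by blast
  ultimately obtain \<T> where \<T>: "\<T> \<subseteq> T ` \<U>" "finite \<T>" "ev ` K \<subseteq> \<Union>\<T>"
    by (rule compactE)
  then obtain \<U>' where \<U>': "\<U>' \<subseteq> \<U>" "finite \<U>'" "\<T> = T ` \<U>'"
    using finite_subset_image[OF \<T>(2,1)] by blast
  have "K \<subseteq> \<Union>\<U>'"
  proof
    fix x assume "x \<in> K"
    then have "ev x \<in> \<Union>(T ` \<U>')" using \<T>(3) \<U>'(3) by blast
    then obtain u where "u \<in> \<U>'" "ev x \<in> T u" by blast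
    then show "x \<in> \<Union>\<U>'" using T(2) \<U>'(1) by auto
  qed
  then show "\<exists>\<F>. finite \<F> \<and> \<F> \<subseteq> \<U> \<and> K \<subseteq> \<Union>\<F>" using \<U>' by blast
qed

lemma compact_bounded_linear_forms:
  fixes Z :: "'b::real_normed_vector set"
  shows "compact {\<phi>::'b \<Rightarrow> real. linear \<phi> \<and> (\<forall>f. \<bar>\<phi> f\<bar> \<le> R * norm f) \<and> (\<forall>f\<in>Z. \<phi> f = 0)}"
    (is "compact ?Q")
proof -
  define Box where "Box = PiE UNIV (\<lambda>f::'b. {- R * norm f .. R * norm f})"
  have "compactin (product_topology (\<lambda>_. euclidean) UNIV) Box"
    unfolding Box_def compactin_PiE by simp
  then have "compact Box" by (simp add: euclidean_product_topology)
  have cont: "continuous_on UNIV (\<lambda>\<phi>::'b \<Rightarrow> real. \<phi> f)" for f by simp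
  have "closed {\<phi>::'b \<Rightarrow> real. \<phi> (f + g) = \<phi> f + \<phi> g}" for f g
    by (rule closed_Collect_eq) (intro continuous_intros cont)+
  moreover have "closed {\<phi>::'b \<Rightarrow> real. \<phi> (a *\<^sub>R f) = a * \<phi> f}" for a f
    by (rule closed_Collect_eq) (intro continuous_intros cont)+
  moreover have "closed {\<phi>::'b \<Rightarrow> real. \<bar>\<phi> f\<bar> \<le> R * norm f}" for f
    by (rule closed_Collect_le) (intro continuous_intros cont)+
  moreover have "closed {\<phi>::'b \<Rightarrow> real. \<phi> f = 0}" for f
    by (rule closed_Collect_eq) (intro continuous_intros cont)+
  moreover have "?Q = (\<Inter>f g. {\<phi>. \<phi> (f + g) = \<phi> f + \<phi> g}) \<inter> (\<Inter>a f. {\<phi>. \<phi> (a *\<^sub>R f) = a * \<phi> f})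
      \<inter> (\<Inter>f. {\<phi>. \<bar>\<phi> f\<bar> \<le> R * norm f}) \<inter> (\<Inter>f\<in>Z. {\<phi>. \<phi> f = 0})"
    by (auto simp: linear_iff)
  ultimately have "closed ?Q" by (metis (no_types, lifting) closed_INT closed_Int)
  then have "compact (Box \<inter> ?Q)" using \<open>compact Box\<close> by (rule compact_Int_closed[rotated])
  moreover have "Box \<inter> ?Q = ?Q"
    unfolding Box_def by (auto simp: PiE_iff abs_le_iff) (metis minus_le_iff)
  ultimately show ?thesis by simp
qed

text \<open>The set below contains \<open>W \<inter> cball 0 R\<close>. By reflexivity, evaluation identifies it with a
  closed subset of the product of the intervals \<open>{-R * norm f..R * norm f}\<close>, which is compact by
  Tychonoff's theorem.\<close>

lemma compactin_weak_topology_bounded_subspace: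
  fixes W :: "'a::real_normed_vector set"
  assumes refl: "reflexive_space TYPE('a)"
    and sep: "\<And>x. x \<notin> W \<Longrightarrow> \<exists>f::'a \<Rightarrow>\<^sub>L real. (\<forall>w\<in>W. f w = 0) \<and> f x \<noteq> 0"
  shows "compactin weak_topology {x\<in>W. \<forall>f::'a \<Rightarrow>\<^sub>L real. \<bar>blinfun_apply f x\<bar> \<le> R * norm f}"
proof -
  let ?K = "{x\<in>W. \<forall>f::'a \<Rightarrow>\<^sub>L real. \<bar>blinfun_apply f x\<bar> \<le> R * norm f}"
  let ?Q = "{\<phi> :: ('a \<Rightarrow>\<^sub>L real) \<Rightarrow> real. linear \<phi> \<and> (\<forall>f. \<bar>\<phi> f\<bar> \<le> R * norm f) \<and> (\<forall>f\<in>{f. \<forall>w\<in>W. blinfun_apply f w = 0}. \<phi> f = 0)}"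
  have ev_K: "(\<lambda>x (f::'a \<Rightarrow>\<^sub>L real). f x) ` ?K = ?Q"
  proof
    show "(\<lambda>x (f::'a \<Rightarrow>\<^sub>L real). f x) ` ?K \<subseteq> ?Q"
      by (auto simp: linear_iff blinfun.add_left blinfun.scaleR_left)
    show "?Q \<subseteq> (\<lambda>x (f::'a \<Rightarrow>\<^sub>L real). f x) ` ?K"
    proof
      fix \<phi> assume \<phi>: "\<phi> \<in> ?Q"
      have "bounded_linear \<phi>"
      proof (rule bounded_linear_intro[where K="\<bar>R\<bar>"])
        show "norm (\<phi> f) \<le> norm f * \<bar>R\<bar>" for f
          using \<phi> order_trans[OF _ mult_right_mono[OF abs_ge_self norm_ge_zero]]
          by (fastforce simp: mult.commute)
      qed (use \<phi> in \<open>auto simp: linear_add linear_scale\<close>)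
      moreover obtain x where "\<forall>f. blinfun_apply (Blinfun \<phi>) f = f x"
        using refl unfolding reflexive_space_def by blast
      ultimately have \<phi>x: "\<phi> = (\<lambda>f. f x)" by (auto simp: bounded_linear_Blinfun_apply)
      have "x \<in> W" using sep \<phi> \<phi>x by force
      then show "\<phi> \<in> (\<lambda>x (f::'a \<Rightarrow>\<^sub>L real). f x) ` ?K" using \<phi> \<phi>x by auto
    qed
  qed
  have "compact ?Q" by (rule compact_bounded_linear_forms)
  then have "compact ((\<lambda>x (f::'a \<Rightarrow>\<^sub>L real). f x) ` ?K)" by (simp only: ev_K)
  then show ?thesis by (rule compactin_weak_topology_if_compact_evaluations)
qed

lemma compactin_sublevel_attains_min:
  fixes g :: "'a \<Rightarrow> real"
  assumes K: "compactin X K" and closed: "\<And>a. closedin X {x\<in>S. g x \<le> a}"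
    and x1: "x1 \<in> S" "{x\<in>S. g x \<le> g x1} \<subseteq> K"
  shows "\<exists>x\<in>S. \<forall>y\<in>S. g x \<le> g y"
proof -
  define L where "L a = {x\<in>S. g x \<le> a}" for a
  define \<U> where "\<U> = L ` {a. a \<le> g x1 \<and> L a \<noteq> {}}"
  have "K \<inter> \<Inter>\<F> \<noteq> {}" if \<F>: "finite \<F>" "\<F> \<subseteq> \<U>" for \<F>
  proof -
    obtain A where A: "A \<subseteq> {a. a \<le> g x1 \<and> L a \<noteq> {}}" "finite A" "\<F> = L ` A"
      using \<F> unfolding \<U>_def by (meson finite_subset_image)
    show ?thesis
    proof (cases "A = {}")
      case True
      then show ?thesis using A(3) x1 by auto
    next
      case False
      then have "Min A \<in> A" using A(2) by simp
      then have "L (Min A) \<noteq> {}" "Min A \<le> g x1" using A(1) by auto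
      moreover have "L (Min A) \<subseteq> L (g x1)" "L (g x1) \<subseteq> K"
        using \<open>Min A \<le> g x1\<close> x1(2) by (auto simp: L_def)
      moreover have "L (Min A) \<subseteq> \<Inter>\<F>"
        using A(3) Min_le[OF A(2)] by (fastforce simp: L_def intro: order_trans)
      ultimately show ?thesis by blast
    qed
  qed
  moreover have "\<forall>C\<in>\<U>. closedin X C" unfolding \<U>_def L_def using closed by blast
  ultimately obtain x0 where x0: "x0 \<in> K" "x0 \<in> \<Inter>\<U>"
    using K unfolding compactin_fip by blast
  have le: "g x0 \<le> a" if "y \<in> S" "g y \<le> a" "a \<le> g x1" for y a
  proof -
    have "L a \<in> \<U>" using that unfolding \<U>_def L_def by blast
    then show ?thesis using x0(2) unfolding L_def by blast
  qed
  have "x0 \<in> S" using x0(2) x1(1) unfolding \<U>_def L_def by blast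
  moreover have "g x0 \<le> g y" if "y \<in> S" for y
    using le[OF that order_refl] le[OF x1(1) order_refl order_refl] by fastforce
  ultimately show ?thesis by blast
qed

lemma weakly_lsc_on_SUP:
  assumes "\<And>v. v \<in> V \<Longrightarrow> weakly_lsc_on W (g v)" "V \<noteq> {}"
    and "\<And>w. w \<in> W \<Longrightarrow> bdd_above ((\<lambda>v. g v w) ` V)"
  shows "weakly_lsc_on W (\<lambda>w. SUP v\<in>V. g v w)"
  unfolding weakly_lsc_on_def
proof
  fix a
  have "(SUP v\<in>V. g v w) \<le> a \<longleftrightarrow> (\<forall>v\<in>V. g v w \<le> a)" if "w \<in> W" for w
    using cSUP_le_iff[OF assms(2) assms(3)[OF that]] .
  then have "{w\<in>W. (SUP v\<in>V. g v w) \<le> a} = \<Inter>((\<lambda>v. {w\<in>W. g v w \<le> a}) ` V)"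
    using assms(2) by auto
  moreover have "closedin (subtopology weak_topology W) {w\<in>W. g v w \<le> a}" if "v \<in> V" for v
    using assms(1)[OF that] unfolding weakly_lsc_on_def by blast
  ultimately show "closedin (subtopology weak_topology W) {w\<in>W. (SUP v\<in>V. g v w) \<le> a}"
    using assms(2) by (auto intro!: closedin_Inter)
qed

lemma weakly_lsc_coercive_attains_min:
  fixes g :: "'a::real_normed_vector \<Rightarrow> real"
  assumes refl: "reflexive_space TYPE('a)"
    and sep: "\<And>x. x \<notin> W \<Longrightarrow> \<exists>f::'a \<Rightarrow>\<^sub>L real. (\<forall>w\<in>W. f w = 0) \<and> f x \<noteq> 0"
    and lsc: "weakly_lsc_on W g"
    and coercive: "\<And>M. \<exists>R. \<forall>w\<in>W. R \<le> norm w \<longrightarrow> M \<le> g w"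
    and "w1 \<in> W"
  shows "\<exists>w0\<in>W. \<forall>w\<in>W. g w0 \<le> g w"
proof -
  obtain R where R: "\<forall>w\<in>W. R \<le> norm w \<longrightarrow> g w1 + 1 \<le> g w" using coercive by blast
  define K where "K = {x\<in>W. \<forall>f::'a \<Rightarrow>\<^sub>L real. \<bar>blinfun_apply f x\<bar> \<le> R * norm f}"
  have "compactin (subtopology weak_topology W) K"
    using compactin_weak_topology_bounded_subspace[OF refl sep]
    by (simp add: compactin_subtopology K_def)
  moreover have "{w\<in>W. g w \<le> g w1} \<subseteq> K"
  proof safe
    fix w assume w: "w \<in> W" "g w \<le> g w1"
    then have "norm w \<le> R" using R by force
    then have "\<bar>f w\<bar> \<le> R * norm f" for f :: "'a \<Rightarrow>\<^sub>L real"
      using norm_blinfun[of f w] mult_left_mono[of "norm w" R "norm f"] by (simp add: mult.commute)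
    then show "w \<in> K" unfolding K_def using w by blast
  qed
  ultimately show ?thesis
    using compactin_sublevel_attains_min[of _ K W g w1] lsc \<open>w1 \<in> W\<close>
    unfolding weakly_lsc_on_def by blast
qed

section \<open>An intersection lemma of Sion type\<close>

lemma connected_family_meets_intersection:
  fixes D :: "real \<Rightarrow> 'a::topological_space set"
  assumes conn: "\<And>l. l \<in> {0..1} \<Longrightarrow> connected (D l)" and ne: "\<And>l. l \<in> {0..1} \<Longrightarrow> D l \<noteq> {}"
    and sub: "\<And>l. l \<in> {0..1} \<Longrightarrow> D l \<subseteq> A \<union> B" and AB: "closed A" "closed B"
    and closed_IA: "closed {l\<in>{0..1}. D l \<inter> A \<noteq> {}}"
    and closed_IB: "closed {l\<in>{0..1}. D l \<inter> B \<noteq> {}}"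
    and ends: "D 0 \<inter> A \<noteq> {}" "D 1 \<inter> B \<noteq> {}"
  shows "\<exists>l\<in>{0..1}. D l \<inter> A \<inter> B \<noteq> {}"
proof (rule ccontr)
  assume "\<not> ?thesis"
  then have "A \<inter> D l = {} \<or> B \<inter> D l = {}" if "l \<in> {0..1}" for l
    using connected_closedD[OF conn[OF that] _ sub[OF that] AB] that by blast
  then have "{l\<in>{0..1}. D l \<inter> A \<noteq> {}} \<inter> {l\<in>{0..1}. D l \<inter> B \<noteq> {}} \<inter> {0..1} = {}"
    by blast
  moreover have "{0..1} \<subseteq> {l\<in>{0..1}. D l \<inter> A \<noteq> {}} \<union> {l\<in>{0..1}. D l \<inter> B \<noteq> {}}"
    using ne sub by blast
  ultimately have "{l\<in>{0..1}. D l \<inter> A \<noteq> {}} \<inter> {0..1} = {} \<or> {l\<in>{0..1}. D l \<inter> B \<noteq> {}} \<inter> {0..1} = {}"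
    by (rule connected_closedD[OF connected_Icc _ _ closed_IA closed_IB])
  moreover have "0 \<in> {l\<in>{0..1}. D l \<inter> A \<noteq> {}}" "1 \<in> {l\<in>{0..1::real}. D l \<inter> B \<noteq> {}}"
    using ends by auto
  ultimately show False by blast
qed

lemma closed_parameters_with_common_nonneg_point:
  fixes K :: "'a::metric_space set" and g :: "real \<Rightarrow> 'a \<Rightarrow> real" and h :: "'a \<Rightarrow> real"
  assumes K: "compact K" and g: "continuous_on ({0..1} \<times> K) (\<lambda>p. g (fst p) (snd p))"
    and h: "continuous_on K h"
  shows "closed {l\<in>{0..1}. \<exists>v\<in>K. 0 \<le> g l v \<and> 0 \<le> h v}"
proof -
  let ?S = "{0..1::real} \<times> K" and ?m = "\<lambda>p. min (g (fst p) (snd p)) (h (snd p))"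
  have "compact ?S" by (rule compact_Times[OF compact_Icc K])
  moreover have "continuous_on ?S ?m"
    by (intro continuous_intros g continuous_on_compose2[OF h continuous_on_snd]) auto
  ultimately have "closed {p\<in>?S. 0 \<le> ?m p}"
    by (intro continuous_on_closed_Collect_le continuous_on_const compact_imp_closed)
  then have "compact (?S \<inter> {p\<in>?S. 0 \<le> ?m p})" by (rule compact_Int_closed[OF \<open>compact ?S\<close>])
  moreover have "?S \<inter> {p\<in>?S. 0 \<le> ?m p} = {p\<in>?S. 0 \<le> ?m p}" by blast
  ultimately have "compact {p\<in>?S. 0 \<le> ?m p}" by simp
  then have "compact (fst ` {p\<in>?S. 0 \<le> ?m p})"
    by (rule compact_continuous_image[OF continuous_on_fst[OF continuous_on_id]])
  moreover have "fst ` {p\<in>?S. 0 \<le> ?m p} = {l\<in>{0..1}. \<exists>v\<in>K. 0 \<le> g l v \<and> 0 \<le> h v}"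
    by (auto simp: image_iff Bex_def) blast
  ultimately show ?thesis by (simp add: compact_imp_closed)
qed

lemma nonneg_pair_on_compact_convex:
  fixes K M :: "'a::real_normed_vector set" and F :: "'a \<Rightarrow> 'b::real_vector \<Rightarrow> real"
  assumes lin: "\<And>v. v \<in> M \<Longrightarrow> linear (F v)" and W: "subspace W"
    and cont: "\<And>d. d \<in> W \<Longrightarrow> continuous_on M (\<lambda>v. F v d)"
    and cvx: "\<And>d. d \<in> W \<Longrightarrow> convex {v\<in>M. 0 \<le> F v d}"
    and K: "K \<subseteq> M" "compact K" "convex K"
    and nonneg: "\<And>d. d \<in> W \<Longrightarrow> \<exists>v\<in>K. 0 \<le> F v d"
    and d: "d1 \<in> W" "d2 \<in> W"
  shows "\<exists>v\<in>K. 0 \<le> F v d1 \<and> 0 \<le> F v d2"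
proof -
  txt \<open>Komiya's argument: along \<open>dl l = (1 - l) *\<^sub>R d1 + l *\<^sub>R d2\<close> the connected sets
    \<open>C (dl l)\<close> are covered by the closed sets \<open>C d1\<close> and \<open>C d2\<close>, starting inside the first and
    ending inside the second.\<close>
  define dl where "dl l = (1 - l) *\<^sub>R d1 + l *\<^sub>R d2" for l
  define C where "C e = {v\<in>K. 0 \<le> F v e}" for e
  have dl_W: "dl l \<in> W" for l unfolding dl_def using W d by (intro subspace_add subspace_scale)
  have F_dl: "F v (dl l) = (1 - l) * F v d1 + l * F v d2" if "v \<in> K" for v l
    using lin[of v] that K(1) by (auto simp: dl_def linear_add linear_scale)
  have cont_K: "continuous_on K (\<lambda>v. F v e)" if "e \<in> W" for e
    using continuous_on_subset[OF cont[OF that] K(1)] .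
  have closed_C: "closed (C e)" if "e \<in> W" for e
    unfolding C_def
    using continuous_on_closed_Collect_le[OF continuous_on_const cont_K[OF that] compact_imp_closed[OF K(2)]] .
  have closed_parameters: "closed {l\<in>{0..1}. C (dl l) \<inter> C e \<noteq> {}}" if "e \<in> W" for e
  proof -
    have "continuous_on ({0..1} \<times> K) (\<lambda>p. (1 - fst p) * F (snd p) d1 + fst p * F (snd p) d2)"
      using cont_K[OF d(1)] cont_K[OF d(2)]
      by (intro continuous_intros continuous_on_compose2[of K _ _ snd]) auto
    moreover have "{l\<in>{0..1}. C (dl l) \<inter> C e \<noteq> {}}
        = {l\<in>{0..1}. \<exists>v\<in>K. 0 \<le> (1 - l) * F v d1 + l * F v d2 \<and> 0 \<le> F v e}"
      unfolding C_def using F_dl by auto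
    ultimately show ?thesis
      using closed_parameters_with_common_nonneg_point[OF K(2) _ cont_K[OF that],
          of "\<lambda>l v. (1 - l) * F v d1 + l * F v d2"] by simp
  qed
  have "\<exists>l\<in>{0..1}. C (dl l) \<inter> C d1 \<inter> C d2 \<noteq> {}"
  proof (rule connected_family_meets_intersection[OF _ _ _ closed_C[OF d(1)] closed_C[OF d(2)]
        closed_parameters[OF d(1)] closed_parameters[OF d(2)]])
    show "connected (C (dl l))" for l
    proof -
      have "C (dl l) = K \<inter> {v\<in>M. 0 \<le> F v (dl l)}" using K(1) by (auto simp: C_def)
      then show ?thesis using K(3) cvx[OF dl_W] by (simp add: convex_Int convex_connected)
    qed
    show "C (dl l) \<noteq> {}" for l using nonneg[OF dl_W] by (auto simp: C_def)
    show "C (dl l) \<subseteq> C d1 \<union> C d2" if "l \<in> {0..1}" for l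
    proof
      fix v assume v: "v \<in> C (dl l)"
      show "v \<in> C d1 \<union> C d2"
      proof (rule ccontr)
        assume "v \<notin> C d1 \<union> C d2"
        then have "(1 - l) * F v d1 + l * F v d2 < 0"
          using v that by (intro convex_bound_lt) (auto simp: C_def)
        then show False using v F_dl by (auto simp: C_def)
      qed
    qed
    show "C (dl 0) \<inter> C d1 \<noteq> {}" "C (dl 1) \<inter> C d2 \<noteq> {}"
      using nonneg[OF d(1)] nonneg[OF d(2)] by (auto simp: C_def dl_def)
  qed
  then show ?thesis by (auto simp: C_def)
qed

lemma nonneg_finite_on_compact_convex:
  fixes K M :: "'a::real_normed_vector set" and F :: "'a \<Rightarrow> 'b::real_vector \<Rightarrow> real"
  assumes lin: "\<And>v. v \<in> M \<Longrightarrow> linear (F v)" and W: "subspace W"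
    and cont: "\<And>d. d \<in> W \<Longrightarrow> continuous_on M (\<lambda>v. F v d)"
    and cvx: "\<And>d. d \<in> W \<Longrightarrow> convex {v\<in>M. 0 \<le> F v d}"
    and D: "finite D" "D \<subseteq> W"
  shows "K \<subseteq> M \<Longrightarrow> compact K \<Longrightarrow> convex K \<Longrightarrow> (\<And>d. d \<in> W \<Longrightarrow> \<exists>v\<in>K. 0 \<le> F v d)
    \<Longrightarrow> \<exists>v\<in>K. \<forall>d\<in>D. 0 \<le> F v d"
  using D
proof (induction D arbitrary: K rule: finite_induct)
  case empty
  then show ?case using subspace_0[OF W] by blast
next
  case (insert e D)
  define K' where "K' = {v\<in>K. 0 \<le> F v e}"
  have e: "e \<in> W" using insert.prems(5) by simp
  have K'_M: "K' \<subseteq> M" using insert.prems(1) by (auto simp: K'_def)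
  have compact_K': "compact K'"
  proof -
    have "closed K'"
      using continuous_on_closed_Collect_le[OF continuous_on_const
          continuous_on_subset[OF cont[OF e] insert.prems(1)] compact_imp_closed[OF insert.prems(2)]]
      by (simp add: K'_def)
    then have "compact (K \<inter> K')" by (rule compact_Int_closed[OF insert.prems(2)])
    moreover have "K \<inter> K' = K'" by (auto simp: K'_def)
    ultimately show ?thesis by simp
  qed
  have convex_K': "convex K'"
  proof -
    have "K' = K \<inter> {v\<in>M. 0 \<le> F v e}" using insert.prems(1) by (auto simp: K'_def)
    then show ?thesis using insert.prems(3) cvx[OF e] by (simp add: convex_Int)
  qed
  have nonneg_K': "\<exists>v\<in>K'. 0 \<le> F v d" if "d \<in> W" for d
    using nonneg_pair_on_compact_convex[OF lin W cont cvx insert.prems(1-4) that e]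
    by (auto simp: K'_def)
  have "D \<subseteq> W" using insert.prems(5) by simp
  then obtain v where "v \<in> K'" "\<forall>d\<in>D. 0 \<le> F v d"
    using insert.IH[OF K'_M compact_K' convex_K' nonneg_K'] by blast
  then show ?case by (auto simp: K'_def)
qed

lemma nonneg_on_compact_convex:
  fixes M :: "'a::real_normed_vector set" and F :: "'a \<Rightarrow> 'b::real_vector \<Rightarrow> real"
  assumes lin: "\<And>v. v \<in> M \<Longrightarrow> linear (F v)" and W: "subspace W"
    and cont: "\<And>d. d \<in> W \<Longrightarrow> continuous_on M (\<lambda>v. F v d)"
    and cvx: "\<And>d. d \<in> W \<Longrightarrow> convex {v\<in>M. 0 \<le> F v d}"
    and M: "compact M" "convex M"
    and nonneg: "\<And>d. d \<in> W \<Longrightarrow> \<exists>v\<in>M. 0 \<le> F v d"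
  shows "\<exists>v\<in>M. \<forall>d\<in>W. 0 \<le> F v d"
proof -
  define C where "C d = {v\<in>M. 0 \<le> F v d}" for d
  have "closed (C d)" if "d \<in> W" for d
    unfolding C_def
    using continuous_on_closed_Collect_le[OF continuous_on_const cont[OF that] compact_imp_closed[OF M(1)]] .
  then have "\<forall>c\<in>C ` W. closed c" by blast
  moreover have "\<forall>\<F>\<subseteq>C ` W. finite \<F> \<longrightarrow> M \<inter> \<Inter>\<F> \<noteq> {}"
  proof (intro allI impI)
    fix \<F> assume \<F>: "\<F> \<subseteq> C ` W" "finite \<F>"
    obtain D where D: "D \<subseteq> W" "finite D" "\<F> = C ` D"
      using finite_subset_image[OF \<F>(2,1)] by blast
    then obtain v where "v \<in> M" "\<forall>d\<in>D. 0 \<le> F v d"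
      using nonneg_finite_on_compact_convex[OF lin W cont cvx D(2,1) order_refl M nonneg] by blast
    then show "M \<inter> \<Inter>\<F> \<noteq> {}" using D(3) by (auto simp: C_def)
  qed
  ultimately have "M \<inter> \<Inter>(C ` W) \<noteq> {}"
    using compact_fip[THEN iffD1, OF M(1), rule_format, of "C ` W"] by blast
  then show ?thesis by (auto simp: C_def)
qed

section \<open>Saddle structure and the critical point\<close>

lemma continuous_attains_sup_anticoercive:
  fixes g :: "'a::real_normed_vector \<Rightarrow> real"
  assumes compact: "\<And>R. compact (S \<inter> cball 0 R)" and cont: "continuous_on S g" and "x1 \<in> S"
    and anticoercive: "\<And>M. \<exists>R. \<forall>x\<in>S. R \<le> norm x \<longrightarrow> g x \<le> M"
  shows "\<exists>x\<in>S. \<forall>y\<in>S. g y \<le> g x"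
proof -
  obtain R where R: "\<forall>x\<in>S. R \<le> norm x \<longrightarrow> g x \<le> g x1 - 1" using anticoercive by blast
  define K where "K = S \<inter> cball 0 (max R (norm x1))"
  have "x1 \<in> K" using \<open>x1 \<in> S\<close> by (simp add: K_def)
  moreover have "continuous_on K g" using cont by (rule continuous_on_subset) (simp add: K_def)
  ultimately obtain x0 where x0: "x0 \<in> K" "\<forall>y\<in>K. g y \<le> g x0"
    using continuous_attains_sup[OF compact[of "max R (norm x1)", folded K_def]] by blast
  have "g y \<le> g x0" if "y \<in> S" for y
  proof (cases "y \<in> K")
    case False
    then have "g y \<le> g x1 - 1" using R that by (auto simp: K_def)
    then show ?thesis using x0(2) \<open>x1 \<in> K\<close> by fastforce
  qed (use x0 in blast)
  then show ?thesis using x0(1) by (auto simp: K_def)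
qed

locale minimax_setting =
  fixes \<Phi> :: "'a::real_normed_vector \<Rightarrow> real" and \<Phi>' :: "'a \<Rightarrow> 'a \<Rightarrow>\<^sub>L real"
    and V W :: "'a set"
  assumes subspace_V: "subspace V" and subspace_W: "subspace W" and V_plus_W: "V + W = UNIV"
    and compact_V_cball: "\<And>R. compact (V \<inter> cball 0 R)"
    and Phi_has_derivative: "\<And>u. (\<Phi> has_derivative \<Phi>' u) (at u)"
    and continuous_derivative: "continuous_on UNIV \<Phi>'"
    and quasi_concave: "\<And>w. w \<in> W \<Longrightarrow> quasi_concave_on V (\<lambda>v. \<Phi> (v + w))"
    and anticoercive: "\<And>r M. \<exists>R. \<forall>v\<in>V. \<forall>w\<in>W. R \<le> norm v \<and> norm w \<le> r \<longrightarrow> \<Phi> (v + w) \<le> M"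
begin

lemma isCont_Phi: "isCont \<Phi> x"
  using Phi_has_derivative by (rule has_derivative_continuous)

lemma continuous_on_Phi_translate: "continuous_on S (\<lambda>v. \<Phi> (v + a))"
  by (intro continuous_at_imp_continuous_on ballI continuous_intros isCont_o2[OF _ isCont_Phi])

lemma has_real_derivative_line:
  "((\<lambda>s. \<Phi> (x + s *\<^sub>R d)) has_real_derivative \<Phi>' (x + t *\<^sub>R d) d) (at t)"
proof -
  have "((\<lambda>s. x + s *\<^sub>R d) has_derivative (\<lambda>s. s *\<^sub>R d)) (at t)"
    by (auto intro!: derivative_eq_intros)
  from diff_chain_at[OF this Phi_has_derivative]
  have "((\<lambda>s. \<Phi> (x + s *\<^sub>R d)) has_derivative (\<lambda>s. s * \<Phi>' (x + t *\<^sub>R d) d)) (at t)"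
    by (simp add: o_def blinfun.scaleR_right)
  then show ?thesis by (rule has_derivative_imp_has_field_derivative) simp
qed

lemma exists_maximizer: "w \<in> W \<Longrightarrow> \<exists>v\<in>V. \<forall>v'\<in>V. \<Phi> (v' + w) \<le> \<Phi> (v + w)"
proof (rule continuous_attains_sup_anticoercive[OF compact_V_cball continuous_on_Phi_translate])
  show "0 \<in> V" using subspace_V by (rule subspace_0)
  show "\<exists>R. \<forall>v\<in>V. R \<le> norm v \<longrightarrow> \<Phi> (v + w) \<le> M" if "w \<in> W" for M
    using anticoercive[of "norm w" M] that by blast
qed

definition max_V :: "'a \<Rightarrow> real" where
  "max_V w = (SUP v\<in>V. \<Phi> (v + w))"

lemma bdd_above_V: "w \<in> W \<Longrightarrow> bdd_above ((\<lambda>v. \<Phi> (v + w)) ` V)"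
  using exists_maximizer by (fastforce simp: bdd_above_def)

lemma Phi_le_max_V: "w \<in> W \<Longrightarrow> v \<in> V \<Longrightarrow> \<Phi> (v + w) \<le> max_V w"
  unfolding max_V_def by (rule cSUP_upper[OF _ bdd_above_V])

lemma max_V_attained:
  assumes "w \<in> W" shows "\<exists>v\<in>V. \<Phi> (v + w) = max_V w"
proof -
  obtain v where v: "v \<in> V" "\<forall>v'\<in>V. \<Phi> (v' + w) \<le> \<Phi> (v + w)"
    using exists_maximizer[OF assms] by blast
  then have "max_V w = \<Phi> (v + w)" unfolding max_V_def by (intro cSup_eq_maximum) auto
  then show ?thesis using v(1) by auto
qed

definition maximizers :: "'a \<Rightarrow> 'a set" where
  "maximizers w = {v\<in>V. max_V w \<le> \<Phi> (v + w)}"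

lemma Phi_maximizer: "w \<in> W \<Longrightarrow> v \<in> maximizers w \<Longrightarrow> \<Phi> (v + w) = max_V w"
  unfolding maximizers_def using Phi_le_max_V by force

lemma compact_maximizers:
  assumes "w \<in> W" shows "compact (maximizers w)"
proof -
  obtain R where R: "\<forall>v\<in>V. R \<le> norm v \<longrightarrow> \<Phi> (v + w) \<le> max_V w - 1"
    using anticoercive[of "norm w" "max_V w - 1"] assms by blast
  have "norm v \<le> R" if "v \<in> maximizers w" for v
  proof (rule ccontr)
    assume "\<not> norm v \<le> R"
    then have "\<Phi> (v + w) \<le> max_V w - 1" using R that by (auto simp: maximizers_def)
    then show False using that by (auto simp: maximizers_def)
  qed
  then have "maximizers w = (V \<inter> cball 0 R) \<inter> {v. max_V w \<le> \<Phi> (v + w)}"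
    by (auto simp: maximizers_def)
  moreover have "closed {v. max_V w \<le> \<Phi> (v + w)}"
    by (intro closed_Collect_le continuous_on_const continuous_on_Phi_translate)
  ultimately show ?thesis using compact_Int_closed[OF compact_V_cball] by simp
qed

lemma convex_maximizers:
  assumes "w \<in> W" shows "convex (maximizers w)"
proof (rule convexI)
  fix x y and s t :: real
  assume xy: "x \<in> maximizers w" "y \<in> maximizers w" and st: "0 \<le> s" "0 \<le> t" "s + t = 1"
  have "x \<in> V" "y \<in> V" using xy by (auto simp: maximizers_def)
  then have "s *\<^sub>R x + t *\<^sub>R y \<in> V" using subspace_V by (simp add: subspace_add subspace_scale)
  have "min (\<Phi> (x + w)) (\<Phi> (y + w)) \<le> \<Phi> (s *\<^sub>R x + (1 - s) *\<^sub>R y + w)"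
    by (rule quasi_concave[OF assms, unfolded quasi_concave_on_def, rule_format])
      (use \<open>x \<in> V\<close> \<open>y \<in> V\<close> st in auto)
  moreover have "1 - s = t" "\<Phi> (x + w) = max_V w" "\<Phi> (y + w) = max_V w"
    using st(3) Phi_maximizer[OF assms] xy by auto
  ultimately show "s *\<^sub>R x + t *\<^sub>R y \<in> maximizers w"
    using \<open>s *\<^sub>R x + t *\<^sub>R y \<in> V\<close> unfolding maximizers_def by simp
qed

lemma derivative_vanishes_on_V:
  assumes w: "w \<in> W" and v: "v \<in> maximizers w" and a: "a \<in> V"
  shows "\<Phi>' (v + w) a = 0"
proof -
  have der: "((\<lambda>s. \<Phi> (v + w + s *\<^sub>R a)) has_real_derivative \<Phi>' (v + w) a) (at 0)"
    using has_real_derivative_line[of "v + w" a 0] by simp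
  have max: "\<forall>s. \<bar>0 - s\<bar> < 1 \<longrightarrow> \<Phi> (v + w + s *\<^sub>R a) \<le> \<Phi> (v + w + 0 *\<^sub>R a)"
  proof (intro allI impI)
    fix s :: real
    have "v + s *\<^sub>R a \<in> V" using v a subspace_V by (auto simp: maximizers_def subspace_add subspace_scale)
    then have "\<Phi> (v + s *\<^sub>R a + w) \<le> \<Phi> (v + w)" using Phi_le_max_V Phi_maximizer w v by simp
    then show "\<Phi> (v + w + s *\<^sub>R a) \<le> \<Phi> (v + w + 0 *\<^sub>R a)" by (simp add: ac_simps)
  qed
  show ?thesis using DERIV_local_max[OF der zero_less_one] max by simp
qed

lemma maximizer_difference_quotient:
  assumes "w \<in> W" "v \<in> maximizers w"
  shows "((\<lambda>t. (\<Phi> (v + w + t *\<^sub>R d) - max_V w) / t) \<longlongrightarrow> \<Phi>' (v + w) d) (at_right 0)"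
proof -
  have "((\<lambda>t. (\<Phi> (v + w + t *\<^sub>R d) - \<Phi> (v + w + 0 *\<^sub>R d)) / (t - 0)) \<longlongrightarrow> \<Phi>' (v + w) d) (at 0)"
    using has_real_derivative_line[of "v + w" d 0] unfolding has_field_derivative_iff by simp
  then show ?thesis
    using Phi_maximizer[OF assms] by (simp add: tendsto_mono[OF at_within_le_at])
qed

lemma convex_maximizers_nonneg_derivative:
  assumes w: "w \<in> W" and d: "d \<in> W"
  shows "convex {v\<in>maximizers w. 0 \<le> \<Phi>' (v + w) d}"
proof (rule convexI)
  fix x y and s t :: real
  assume x: "x \<in> {v\<in>maximizers w. 0 \<le> \<Phi>' (v + w) d}" and y: "y \<in> {v\<in>maximizers w. 0 \<le> \<Phi>' (v + w) d}"
    and st: "0 \<le> s" "0 \<le> t" "s + t = 1"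
  define z where "z = s *\<^sub>R x + t *\<^sub>R y"
  have z: "z \<in> maximizers w" using convex_maximizers[OF w] x y st unfolding z_def convex_def by blast
  define q where "q v \<tau> = (\<Phi> (v + w + \<tau> *\<^sub>R d) - max_V w) / \<tau>" for v \<tau>
  have "\<forall>\<^sub>F \<tau> in at_right 0. min (q x \<tau>) (q y \<tau>) \<le> q z \<tau>"
    using eventually_at_right_less[of "0::real"]
  proof (rule eventually_mono)
    fix \<tau> :: real assume "0 < \<tau>"
    have "w + \<tau> *\<^sub>R d \<in> W" using w d subspace_W by (simp add: subspace_add subspace_scale)
    moreover have "x \<in> V" "y \<in> V" using x y by (auto simp: maximizers_def)
    ultimately have "min (\<Phi> (x + (w + \<tau> *\<^sub>R d))) (\<Phi> (y + (w + \<tau> *\<^sub>R d)))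
        \<le> \<Phi> (s *\<^sub>R x + (1 - s) *\<^sub>R y + (w + \<tau> *\<^sub>R d))"
      using st by (intro quasi_concave[unfolded quasi_concave_on_def, rule_format]) auto
    moreover have "1 - s = t" using st(3) by simp
    ultimately have "min (\<Phi> (x + w + \<tau> *\<^sub>R d)) (\<Phi> (y + w + \<tau> *\<^sub>R d)) \<le> \<Phi> (z + w + \<tau> *\<^sub>R d)"
      by (simp add: z_def add.assoc)
    then show "min (q x \<tau>) (q y \<tau>) \<le> q z \<tau>"
      using \<open>0 < \<tau>\<close> by (auto simp: q_def min_le_iff_disj divide_right_mono)
  qed
  then have "min (\<Phi>' (x + w) d) (\<Phi>' (y + w) d) \<le> \<Phi>' (z + w) d"
    using maximizer_difference_quotient[OF w] x y z unfolding q_def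
    by (intro tendsto_le[OF trivial_limit_at_right_real _ tendsto_min]) auto
  then show "s *\<^sub>R x + t *\<^sub>R y \<in> {v\<in>maximizers w. 0 \<le> \<Phi>' (v + w) d}"
    using x y z unfolding z_def by auto
qed

lemma mean_value_nonneg_derivative:
  assumes "0 < t" "\<Phi> x \<le> \<Phi> (x + t *\<^sub>R d)"
  shows "\<exists>z. 0 < z \<and> z < t \<and> 0 \<le> \<Phi>' (x + z *\<^sub>R d) d"
proof -
  obtain z where z: "0 < z" "z < t"
    "\<Phi> (x + t *\<^sub>R d) - \<Phi> (x + 0 *\<^sub>R d) = (t - 0) * \<Phi>' (x + z *\<^sub>R d) d"
    using MVT2[OF assms(1) has_real_derivative_line] by blast
  then have "0 \<le> t * \<Phi>' (x + z *\<^sub>R d) d" using assms(2) by simp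
  then show ?thesis using z(1,2) assms(1) by (auto simp: zero_le_mult_iff)
qed

lemma isCont_derivative: "isCont \<Phi>' x"
  using continuous_derivative by (simp add: continuous_on_eq_continuous_at)

lemma limit_point_nonneg_derivative:
  assumes v: "\<And>n. v n \<in> V \<inter> cball 0 R" and z: "z \<longlonglongrightarrow> 0" and t: "t \<longlonglongrightarrow> 0"
    and deriv: "\<And>n. 0 \<le> \<Phi>' (v n + w + z n *\<^sub>R d) d"
    and level: "\<And>n. c \<le> \<Phi> (v n + w + t n *\<^sub>R d)"
  shows "\<exists>u\<in>V. c \<le> \<Phi> (u + w) \<and> 0 \<le> \<Phi>' (u + w) d"
proof -
  obtain u r where u: "u \<in> V \<inter> cball 0 R" and r: "strict_mono r" "(v \<circ> r) \<longlonglongrightarrow> u"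
    using compact_imp_seq_compact[OF compact_V_cball] v by (metis seq_compactE)
  have lim: "(\<lambda>n. v (r n) + w + s (r n) *\<^sub>R d) \<longlonglongrightarrow> u + w"
    if "s \<longlonglongrightarrow> 0" for s :: "nat \<Rightarrow> real"
    using r(2) LIMSEQ_subseq_LIMSEQ[OF that r(1)]
    by (auto simp: o_def intro!: tendsto_eq_intros)
  have "(\<lambda>n. \<Phi>' (v (r n) + w + z (r n) *\<^sub>R d) d) \<longlonglongrightarrow> \<Phi>' (u + w) d"
    by (intro blinfun.tendsto tendsto_const isCont_tendsto_compose[OF isCont_derivative lim[OF z]])
  then have "0 \<le> \<Phi>' (u + w) d" using deriv by (intro LIMSEQ_le_const) auto
  moreover have "(\<lambda>n. \<Phi> (v (r n) + w + t (r n) *\<^sub>R d)) \<longlonglongrightarrow> \<Phi> (u + w)"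
    by (rule isCont_tendsto_compose[OF isCont_Phi lim[OF t]])
  then have "c \<le> \<Phi> (u + w)" using level by (intro LIMSEQ_le_const) auto
  ultimately show ?thesis using u by blast
qed

lemma minimizer_nonneg_derivative:
  assumes w0: "w0 \<in> W" and min: "\<And>w. w \<in> W \<Longrightarrow> max_V w0 \<le> max_V w" and d: "d \<in> W"
  shows "\<exists>v\<in>maximizers w0. 0 \<le> \<Phi>' (v + w0) d"
proof -
  define t where "t n = inverse (real (Suc n))" for n
  have t: "0 < t n" "t n \<le> 1" for n by (simp_all add: t_def field_simps)
  have "t \<longlonglongrightarrow> 0" unfolding t_def by (rule LIMSEQ_inverse_real_of_nat)
  obtain R where R: "\<forall>v\<in>V. \<forall>w\<in>W. R \<le> norm v \<and> norm w \<le> norm w0 + norm d \<longrightarrow> \<Phi> (v + w) \<le> max_V w0 - 1"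
    using anticoercive by blast
  have "\<exists>v. v \<in> V \<inter> cball 0 R \<and> max_V w0 \<le> \<Phi> (v + w0 + t n *\<^sub>R d)" for n
  proof -
    have wt: "w0 + t n *\<^sub>R d \<in> W" using w0 d subspace_W by (simp add: subspace_add subspace_scale)
    obtain v where v: "v \<in> V" "\<Phi> (v + (w0 + t n *\<^sub>R d)) = max_V (w0 + t n *\<^sub>R d)"
      using max_V_attained[OF wt] by blast
    then have ge: "max_V w0 \<le> \<Phi> (v + w0 + t n *\<^sub>R d)" using min[OF wt] by (simp add: add.assoc)
    have "norm (w0 + t n *\<^sub>R d) \<le> norm w0 + norm d"
      using norm_triangle_ineq[of w0 "t n *\<^sub>R d"] t[of n] mult_left_le_one_le[of "norm d" "t n"] by simp
    then have "norm v \<le> R" using R v(1) wt ge by (force simp: add.assoc)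
    then show ?thesis using v(1) ge by auto
  qed
  then obtain v where v: "\<And>n. v n \<in> V \<inter> cball 0 R" "\<And>n. max_V w0 \<le> \<Phi> (v n + w0 + t n *\<^sub>R d)"
    by metis
  have "\<exists>z. 0 < z \<and> z < t n \<and> 0 \<le> \<Phi>' (v n + w0 + z *\<^sub>R d) d" for n
  proof (rule mean_value_nonneg_derivative[OF t(1)])
    show "\<Phi> (v n + w0) \<le> \<Phi> (v n + w0 + t n *\<^sub>R d)"
      using Phi_le_max_V[OF w0] v by (meson IntD1 order_trans)
  qed
  then obtain z where z: "\<And>n. 0 < z n" "\<And>n. z n < t n" "\<And>n. 0 \<le> \<Phi>' (v n + w0 + z n *\<^sub>R d) d"
    by metis
  have "z \<longlonglongrightarrow> 0"
    using z(1,2) \<open>t \<longlonglongrightarrow> 0\<close> by (intro real_tendsto_sandwich[of "\<lambda>_. 0" z _ t]) (auto intro!: always_eventually less_imp_le)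
  then obtain u where "u \<in> V" "max_V w0 \<le> \<Phi> (u + w0)" "0 \<le> \<Phi>' (u + w0) d"
    using limit_point_nonneg_derivative[OF v(1) _ \<open>t \<longlonglongrightarrow> 0\<close> z(3) v(2)] by blast
  then show ?thesis by (auto simp: maximizers_def)
qed

lemma critical_point_at_minimizer:
  assumes w0: "w0 \<in> W" and min: "\<And>w. w \<in> W \<Longrightarrow> max_V w0 \<le> max_V w"
  shows "\<exists>v\<in>maximizers w0. \<Phi>' (v + w0) = 0"
proof -
  have "\<exists>v\<in>maximizers w0. \<forall>d\<in>W. 0 \<le> \<Phi>' (v + w0) d"
  proof (rule nonneg_on_compact_convex[OF _ subspace_W])
    show "linear (blinfun_apply (\<Phi>' (v + w0)))" for v
      by (simp add: blinfun.bounded_linear_right bounded_linear.linear)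
    show "continuous_on (maximizers w0) (\<lambda>v. \<Phi>' (v + w0) d)" for d
      by (intro continuous_at_imp_continuous_on ballI continuous_intros
          isCont_o2[OF _ isCont_derivative] blinfun.continuous)
  qed (use w0 min in \<open>auto simp: convex_maximizers_nonneg_derivative compact_maximizers
      convex_maximizers minimizer_nonneg_derivative\<close>)
  then obtain v where v: "v \<in> maximizers w0" "\<forall>d\<in>W. 0 \<le> \<Phi>' (v + w0) d" by blast
  have "\<Phi>' (v + w0) y = 0" for y
  proof -
    obtain a b where y: "y = a + b" "a \<in> V" "b \<in> W"
      using V_plus_W set_plus_elim[of y V W] by blast
    have "- b \<in> W" using y(3) subspace_W by (simp add: subspace_neg)
    then have "0 \<le> \<Phi>' (v + w0) (- b)" "0 \<le> \<Phi>' (v + w0) b" using v(2) y(3) by auto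
    then have "\<Phi>' (v + w0) b = 0" by (simp add: blinfun.minus_right)
    then show ?thesis using derivative_vanishes_on_V[OF w0 v(1) y(2)] y(1) by (simp add: blinfun.add_right)
  qed
  then have "\<Phi>' (v + w0) = 0" by (intro blinfun_eqI) simp
  then show ?thesis using v(1) by blast
qed

lemma exists_minimizer_max_V:
  assumes refl: "reflexive_space TYPE('a)"
    and sep: "\<And>x. x \<notin> W \<Longrightarrow> \<exists>f::'a \<Rightarrow>\<^sub>L real. (\<forall>w\<in>W. f w = 0) \<and> f x \<noteq> 0"
    and lsc: "\<And>v. v \<in> V \<Longrightarrow> weakly_lsc_on W (\<lambda>w. \<Phi> (v + w))"
    and coercive: "\<And>M. \<exists>R. \<forall>w\<in>W. R \<le> norm w \<longrightarrow> M \<le> \<Phi> w"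
  shows "\<exists>w0\<in>W. \<forall>w\<in>W. max_V w0 \<le> max_V w"
proof (rule weakly_lsc_coercive_attains_min[OF refl sep])
  have "0 \<in> V" using subspace_V by (rule subspace_0)
  then show "weakly_lsc_on W max_V"
    unfolding max_V_def using lsc bdd_above_V by (intro weakly_lsc_on_SUP) auto
  show "\<exists>R. \<forall>w\<in>W. R \<le> norm w \<longrightarrow> M \<le> max_V w" for M
    using coercive[of M] Phi_le_max_V[OF _ \<open>0 \<in> V\<close>] by (metis add_0 order_trans)
  show "0 \<in> W" using subspace_W by (rule subspace_0)
qed

end

theorem theorem1:
  fixes \<Phi> :: "'a::banach \<Rightarrow> real"
    and \<Phi>' :: "'a \<Rightarrow> ('a \<Rightarrow>\<^sub>L real)"
    and V W :: "'a set"
  assumes refl: "reflexive_space TYPE('a)"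
    and subV: "subspace V" and subW: "subspace W" and closedW: "closed W"
    and inter: "V \<inter> W = {0}"
    and sum: "{v + w | v w. v \<in> V \<and> w \<in> W} = UNIV"
    and finV: "\<exists>B. finite B \<and> V = span B"
    and deriv: "\<forall>u. (\<Phi> has_derivative blinfun_apply (\<Phi>' u)) (at u)"
    and C1: "continuous_on UNIV \<Phi>'"
    and coercive: "\<forall>M. \<exists>R. \<forall>w\<in>W. norm w \<ge> R \<longrightarrow> \<Phi> w \<ge> M"
    and qconc: "\<forall>w\<in>W. quasi_concave_on V (\<lambda>v. \<Phi> (v + w))"
    and anticoercive: "\<forall>r M. \<exists>R. \<forall>v\<in>V. \<forall>w\<in>W.
                          norm v \<ge> R \<and> norm w \<le> r \<longrightarrow> \<Phi> (v + w) \<le> M"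
    and wlsc: "\<forall>v\<in>V. weakly_lsc_on W (\<lambda>w. \<Phi> (v + w))"
  shows "(\<forall>w\<in>W. \<exists>v\<in>V. \<forall>v'\<in>V. \<Phi> (v' + w) \<le> \<Phi> (v + w))
       \<and> (\<exists>w0\<in>W. \<forall>w\<in>W. (SUP v\<in>V. \<Phi> (v + w0)) \<le> (SUP v\<in>V. \<Phi> (v + w)))
       \<and> (\<exists>u. \<Phi>' u = 0 \<and> \<Phi> u = (INF w\<in>W. SUP v\<in>V. \<Phi> (v + w)))"
proof -
  obtain B where B: "finite B" "V = span B" using finV by blast
  have V_plus_W: "V + W = UNIV" unfolding sum[symmetric] set_plus_def by blast
  interpret minimax_setting \<Phi> \<Phi>' V W
    using subV subW V_plus_W compact_span_Int_cball[OF B(1)] deriv C1 qconc anticoercive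
    by unfold_locales (auto simp: B(2))
  obtain w0 where w0: "w0 \<in> W" "\<And>w. w \<in> W \<Longrightarrow> max_V w0 \<le> max_V w"
    using exists_minimizer_max_V[OF refl exists_functional_separating_from_subspace
        [OF subW closedW inter V_plus_W B]] wlsc coercive by blast
  obtain v where v: "v \<in> maximizers w0" "\<Phi>' (v + w0) = 0"
    using critical_point_at_minimizer[OF w0] by blast
  have "(INF w\<in>W. max_V w) = max_V w0" using w0 by (intro cInf_eq_minimum) auto
  then have "\<Phi> (v + w0) = (INF w\<in>W. SUP v\<in>V. \<Phi> (v + w))"
    using Phi_maximizer[OF w0(1) v(1)] by (simp add: max_V_def)
  then show ?thesis using exists_maximizer w0 v(2) unfolding max_V_def by blast
qed

end
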